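(* Let $r\ge3$, let $H=C_r$ be the cycle $1-2-\cdots-r-1$ and, for each $i\in\{1,\dots,r\}$, let $G_i$ be a $d_i$-regular graph of order $n_i$ with adjacency eigenvalues $d_i=\lambda_1(A(G_i)),\dots,\lambda_{n_i}(A(G_i))$. Let $G=\bigvee_{C_r}\{G_i:1\le i\le r\}$, $N_i=\sum_{j\in N_{C_r}(i)}n_j$, $\sigma(M_i(s))=\{s^2(d_i+N_i-1)-s\lambda_k(A(G_i))+1\}_{k=1}^{n_i}$ and $\lambda_1(M_i(s))=s^2(d_i+N_i-1)-sd_i+1$. Then $$\sigma(M_G(s))=\bigcup_{i=1}^r\big(\sigma(M_i(s))-\{\lambda_1(M_i(s))\}\big)\cup\sigma(F_r(s)),$$ where $F_r(s)$ is the $r\times r$ symmetric periodic Jacobi matrix with diagonal entries $\lambda_1(M_1(s)),\dots,\lambda_1(M_r(s))$, entries $(F_r(s))_{i,i+1}=(F_r(s))_{i+1,i}=-s\sqrt{n_in_{i+1}}$ for $i=1,\dots,r-1$, $(F_r(s))_{1,r}=(F_r(s))_{r,1}=-s\sqrt{n_1n_r}$, and all other entries $0$ (removing $\{\lambda_1(M_i(s))\}$ means removing one copy, corresponding to $k=1$).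
   Context: For a simple undirected graph $G$ with adjacency matrix $A$, degree matrix $D$ and identity $I$, and real $s$, the deformed Laplacian matrix is $M_G(s)=I-sA+s^2(D-I)$; $\sigma(\cdot)$ is the multiset of eigenvalues. $H$-join: given a graph $H$ on vertex set $\{1,\dots,r\}$ and pairwise vertex-disjoint graphs $G_1,\dots,G_r$, $\bigvee_H\{G_i\}$ has vertex set $\bigcup_iV(G_i)$ and edges $\bigcup_iE(G_i)$ together with all edges $uv$, $u\in V(G_i)$, $v\in V(G_j)$, for each $ij\in E(H)$. *)

theory Defs
  imports "Jordan_Normal_Form.Char_Poly" "HOL-Library.Multiset"
begin

definition simple_graph :: "nat \<Rightarrow> (nat \<Rightarrow> nat \<Rightarrow> bool) \<Rightarrow> bool" where
  "simple_graph n E \<longleftrightarrow> (\<forall>u v. E u v \<longrightarrow> u < n \<and> v < n \<and> E v u \<and> u \<noteq> v)"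

definition degree :: "nat \<Rightarrow> (nat \<Rightarrow> nat \<Rightarrow> bool) \<Rightarrow> nat \<Rightarrow> nat" where
  "degree n E v = card {w. w < n \<and> E v w}"

definition regular :: "nat \<Rightarrow> (nat \<Rightarrow> nat \<Rightarrow> bool) \<Rightarrow> nat \<Rightarrow> bool" where
  "regular n E d \<longleftrightarrow> (\<forall>v<n. degree n E v = d)"

definition adj_mat :: "nat \<Rightarrow> (nat \<Rightarrow> nat \<Rightarrow> bool) \<Rightarrow> real mat" where
  "adj_mat n E = mat n n (\<lambda>(u,v). if E u v then 1 else 0)"

definition deg_mat :: "nat \<Rightarrow> (nat \<Rightarrow> nat \<Rightarrow> bool) \<Rightarrow> real mat" where
  "deg_mat n E = mat n n (\<lambda>(u,v). if u = v then real (degree n E u) else 0)"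

definition deformed_lap :: "nat \<Rightarrow> (nat \<Rightarrow> nat \<Rightarrow> bool) \<Rightarrow> real \<Rightarrow> real mat" where
  "deformed_lap n E s = 1\<^sub>m n - s \<cdot>\<^sub>m adj_mat n E + (s^2) \<cdot>\<^sub>m (deg_mat n E - 1\<^sub>m n)"

definition spec :: "real mat \<Rightarrow> real multiset" where
  "spec A = (THE m. char_poly A = (\<Prod>a\<in>#m. [:- a, 1:]))"

text \<open>H-join.  H is a graph on {0..<r}; G_i has vertex set {0..<nn i} and edges EE i.
  Vertex u of G_i is the global vertex (offset i + u).\<close>
definition offset :: "(nat \<Rightarrow> nat) \<Rightarrow> nat \<Rightarrow> nat" where
  "offset nn i = (\<Sum>j<i. nn j)"

definition hjoin_E :: "nat \<Rightarrow> (nat \<Rightarrow> nat \<Rightarrow> bool) \<Rightarrow> (nat \<Rightarrow> nat) \<Rightarrow>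
    (nat \<Rightarrow> nat \<Rightarrow> nat \<Rightarrow> bool) \<Rightarrow> nat \<Rightarrow> nat \<Rightarrow> bool" where
  "hjoin_E r H nn EE p q \<longleftrightarrow> (\<exists>i<r. \<exists>j<r. \<exists>u<nn i. \<exists>v<nn j.
      p = offset nn i + u \<and> q = offset nn j + v \<and> ((i = j \<and> EE i u v) \<or> H i j))"

definition hjoin_order :: "nat \<Rightarrow> (nat \<Rightarrow> nat) \<Rightarrow> nat" where
  "hjoin_order r nn = offset nn r"

text \<open>The cycle C_r on {0..<r} (vertices 1..r of the paper shifted by one).\<close>
definition cycle_adj :: "nat \<Rightarrow> nat \<Rightarrow> nat \<Rightarrow> bool" where
  "cycle_adj r i j \<longleftrightarrow> i < r \<and> j < r \<and> (j = (i + 1) mod r \<or> i = (j + 1) mod r)"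

definition cycN :: "nat \<Rightarrow> (nat \<Rightarrow> nat) \<Rightarrow> nat \<Rightarrow> nat" where
  "cycN r n i = (\<Sum>j\<in>{j. j < r \<and> cycle_adj r i j}. n j)"

definition lam1M :: "nat \<Rightarrow> (nat \<Rightarrow> nat) \<Rightarrow> (nat \<Rightarrow> nat) \<Rightarrow> real \<Rightarrow> nat \<Rightarrow> real" where
  "lam1M r n d s i = s^2 * (real (d i) + real (cycN r n i) - 1) - s * real (d i) + 1"

text \<open>The periodic Jacobi matrix F_r(s) (indices 0..r-1 for the paper's 1..r).\<close>
definition F_mat :: "nat \<Rightarrow> (nat \<Rightarrow> nat) \<Rightarrow> (nat \<Rightarrow> nat) \<Rightarrow> real \<Rightarrow> real mat" where
  "F_mat r n d s = mat r r (\<lambda>(i,j). if i = j then lam1M r n d s i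
     else if j = i + 1 \<or> i = j + 1 \<or> (i = 0 \<and> j = r - 1) \<or> (i = r - 1 \<and> j = 0)
          then - s * sqrt (real (n i) * real (n j)) else 0)"

end

theory Submission
  imports Defs
begin

text \<open>
  Order the vertices of the join block by block and put \<open>c\<^sub>i = s\<^sup>2(d\<^sub>i + N\<^sub>i - 1) + 1\<close>.
  Since every \<open>G\<^sub>i\<close> is regular, every block of \<open>M\<^sub>G(s)\<close> has constant row sums: the diagonal
  block \<open>i\<close> is \<open>c\<^sub>i I - s A(G\<^sub>i)\<close> with row sums \<open>\<lambda>\<^sub>1(M\<^sub>i(s))\<close>, and an off-diagonal block is
  \<open>-sJ\<close> or \<open>0\<close>. Hence the block indicator vectors span an invariant subspace (an equitable
  partition), on which \<open>M\<^sub>G(s)\<close> acts, in the normalised indicator basis, by \<open>F\<^sub>r(s)\<close>. So the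
  characteristic polynomial of \<open>M\<^sub>G(s)\<close> is that of \<open>F\<^sub>r(s)\<close> times that of the induced map on
  the quotient. Because the off-diagonal blocks are constant, the quotient map is block diagonal,
  its \<open>i\<close>-th block being the quotient of \<open>c\<^sub>i I - s A(G\<^sub>i)\<close> by the all-ones vector; by the same
  argument with a single block, its characteristic polynomial is that of \<open>c\<^sub>i I - s A(G\<^sub>i)\<close> with
  the linear factor of the eigenvalue \<open>c\<^sub>i - s d\<^sub>i\<close> removed. Symmetric real matrices have real
  spectra, so all characteristic polynomials split and the spectra can be read off.
\<close>

section \<open>Characteristic polynomials and spectra\<close>

lemma poly_prod_mset_linear_factors:
  "poly (\<Prod>a\<in>#m. [:- f a, 1:]) x = (\<Prod>a\<in>#m. x - (f a :: 'a :: idom))"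
  by (induction m) (auto simp: algebra_simps)

lemma proots_prod_mset_linear_factors:
  "proots (\<Prod>a\<in>#m. [:- a, 1:]) = (m :: 'a :: idom multiset)"
proof (induction m)
  case (add a m)
  have "proots ([:- a, 1:] * (\<Prod>a\<in>#m. [:- a, 1:])) = {#a#} + m"
    by (subst proots_mult) (auto simp: prod_mset_zero_iff add.IH)
  thus ?case by simp
qed simp

lemma spec_eqI:
  assumes "char_poly A = (\<Prod>a\<in>#m. [:- a, 1:])"
  shows "spec A = m"
  unfolding spec_def
proof (rule the_equality)
  fix m' assume "char_poly A = (\<Prod>a\<in>#m'. [:- a, 1:])"
  with assms show "m' = m" by (metis proots_prod_mset_linear_factors)
qed (rule assms)

lemma real_symmetric_eigenvalue_real:
  fixes A :: "real mat"
  assumes A: "A \<in> carrier_mat n n" and symm: "transpose_mat A = A"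
    and ev: "eigenvalue (map_mat complex_of_real A) a"
  shows "cnj a = a"
proof -
  let ?B = "map_mat complex_of_real A"
  have A_sym: "A $$ (i,j) = A $$ (j,i)" if "i < n" "j < n" for i j
    using that A by (metis index_transpose_mat(1) carrier_matD symm)
  obtain v where "eigenvector ?B v a" using ev unfolding eigenvalue_def by blast
  hence v: "v \<in> carrier_vec n" "v \<noteq> 0\<^sub>v n" "?B *\<^sub>v v = a \<cdot>\<^sub>v v"
    unfolding eigenvector_def using A by auto
  have Bv: "(\<Sum>j<n. ?B $$ (i,j) * v $ j) = a * v $ i" if "i < n" for i
  proof -
    have "(?B *\<^sub>v v) $ i = (\<Sum>j<n. ?B $$ (i,j) * v $ j)"
      using that A v(1) by (auto simp: scalar_prod_def lessThan_atLeast0 intro!: sum.cong)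
    thus ?thesis using v(3) that v(1) by simp
  qed
  \<comment> \<open>The Rayleigh quotient \<open>v\<^sup>* B v / v\<^sup>* v\<close> equals \<open>a\<close> and is real because \<open>B\<close> is
    real symmetric.\<close>
  define S where "S = (\<Sum>i<n. cnj (v $ i) * (\<Sum>j<n. ?B $$ (i,j) * v $ j))"
  define K where "K = (\<Sum>i<n. (cmod (v $ i))\<^sup>2)"
  have cnj_mult_self: "cnj z * z = of_real ((cmod z)\<^sup>2)" for z
    using complex_norm_square[of z] by (simp add: mult.commute)
  have S_eq: "S = a * of_real K"
    unfolding S_def K_def using Bv
    by (auto simp: of_real_sum sum_distrib_left cnj_mult_self intro!: sum.cong)
  have "cnj S = S"
  proof -
    have "cnj S = (\<Sum>i<n. \<Sum>j<n. v $ i * ?B $$ (i,j) * cnj (v $ j))"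
      unfolding S_def using A by (auto simp: sum_distrib_left intro!: sum.cong)
    also have "\<dots> = (\<Sum>j<n. \<Sum>i<n. v $ i * ?B $$ (i,j) * cnj (v $ j))"
      by (rule sum.swap)
    also have "\<dots> = S"
      unfolding S_def using A A_sym by (auto simp: sum_distrib_left intro!: sum.cong)
    finally show ?thesis .
  qed
  moreover have "K > 0"
  proof -
    obtain i where i: "i < n" "v $ i \<noteq> 0"
      using v(1,2) by (metis eq_vecI carrier_vecD index_zero_vec)
    have "(cmod (v $ i))\<^sup>2 \<le> K" unfolding K_def by (rule member_le_sum) (use i in auto)
    moreover have "(cmod (v $ i))\<^sup>2 > 0" using i by simp
    ultimately show ?thesis by linarith
  qed
  ultimately have "cnj a * of_real K = a * of_real K" and "K \<noteq> 0"
    unfolding S_eq by simp_all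
  thus ?thesis by (metis mult_right_cancel of_real_eq_0_iff)
qed

lemma real_symmetric_char_poly_splits:
  fixes A :: "real mat"
  assumes A: "A \<in> carrier_mat n n" and symm: "transpose_mat A = A"
  shows "\<exists>m. char_poly A = (\<Prod>a\<in>#m. [:- a, 1:])"
proof -
  let ?B = "map_mat complex_of_real A"
  have B: "?B \<in> carrier_mat n n" using A by auto
  obtain as where as: "char_poly ?B = (\<Prod>a\<leftarrow>as. [:- a, 1:])"
    using char_poly_factorized[OF B] by blast
  have real: "of_real (Re a) = a" if "a \<in> set as" for a
  proof -
    have "poly (char_poly ?B) a = 0" unfolding as using that by (induction as) auto
    hence "eigenvalue ?B a" using eigenvalue_root_char_poly[OF B] by simp
    hence "cnj a = a" by (rule real_symmetric_eigenvalue_real[OF A symm])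
    thus ?thesis by (intro of_real_Re) (simp add: Reals_cnj_iff)
  qed
  have "poly (char_poly A) x = (\<Prod>a\<leftarrow>as. x - Re a)" for x
  proof -
    have "complex_of_real (poly (char_poly A) x) = poly (char_poly ?B) (of_real x)"
      by (simp add: of_real_hom.char_poly_hom[OF A] of_real_hom.poly_map_poly)
    also have "\<dots> = (\<Prod>a\<leftarrow>as. of_real x - a)" unfolding as
      by (induction as) (auto simp: algebra_simps)
    also have "\<dots> = (\<Prod>a\<leftarrow>as. of_real (x - Re a))"
      using real by (intro arg_cong[of _ _ prod_list] map_cong) auto
    also have "\<dots> = of_real (\<Prod>a\<leftarrow>as. x - Re a)"
      by (induction as) auto
    finally show ?thesis by (simp only: of_real_eq_iff)
  qed
  hence "char_poly A = (\<Prod>b\<in>#mset (map Re as). [:- b, 1:])"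
    by (intro poly_ext) (simp add: poly_prod_list o_def prod_mset_prod_list flip: mset_map)
  thus ?thesis by blast
qed

lemma char_poly_spec_real_symmetric:
  fixes A :: "real mat"
  assumes "A \<in> carrier_mat n n" and "transpose_mat A = A"
  shows "char_poly A = (\<Prod>a\<in>#spec A. [:- a, 1:])"
  using real_symmetric_char_poly_splits[OF assms] spec_eqI by metis

lemma poly_char_poly_eq_det:
  fixes A :: "'a :: field mat"
  assumes "A \<in> carrier_mat n n"
  shows "poly (char_poly A) x = det (x \<cdot>\<^sub>m 1\<^sub>m n - A)"
proof -
  have "- char_matrix A x = x \<cdot>\<^sub>m 1\<^sub>m n - A"
    by (rule eq_matI) (use assms in \<open>auto simp: char_matrix_def\<close>)
  thus ?thesis using char_poly_matrix[OF assms] by simp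
qed

lemma degree_prod_mset_linear_factors:
  "Polynomial.degree (\<Prod>a\<in>#m. [:- a, 1:]) = size (m :: 'a :: idom multiset)"
proof (induction m)
  case (add a m)
  have "(\<Prod>a\<in>#m. [:- a, 1:]) \<noteq> 0" by (auto simp: prod_mset_zero_iff)
  thus ?case
    unfolding image_mset_add_mset prod_mset.add_mset by (subst degree_mult_eq) (auto simp: add.IH)
qed simp

lemma char_poly_affine:
  fixes A :: "real mat"
  assumes A: "A \<in> carrier_mat n n" and cp: "char_poly A = (\<Prod>a\<in>#m. [:- a, 1:])"
  shows "char_poly (c \<cdot>\<^sub>m 1\<^sub>m n - s \<cdot>\<^sub>m A) = (\<Prod>a\<in>#m. [:- (c - s * a), 1:])"
proof (rule poly_ext)
  fix x
  have size_m: "size m = n"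
    using degree_monic_char_poly[OF A] unfolding cp degree_prod_mset_linear_factors by simp
  have "det (x \<cdot>\<^sub>m 1\<^sub>m n - (c \<cdot>\<^sub>m 1\<^sub>m n - s \<cdot>\<^sub>m A)) = (\<Prod>a\<in>#m. x - (c - s * a))"
  proof (cases "s = 0")
    case True
    have "x \<cdot>\<^sub>m 1\<^sub>m n - (c \<cdot>\<^sub>m 1\<^sub>m n - s \<cdot>\<^sub>m A) = (x - c) \<cdot>\<^sub>m 1\<^sub>m n"
      by (rule eq_matI) (use A True in auto)
    thus ?thesis using True size_m by (simp add: det_smult prod_mset_constant)
  next
    case False
    define y where "y = (c - x) / s"
    have "x \<cdot>\<^sub>m 1\<^sub>m n - (c \<cdot>\<^sub>m 1\<^sub>m n - s \<cdot>\<^sub>m A) = (- s) \<cdot>\<^sub>m (y \<cdot>\<^sub>m 1\<^sub>m n - A)"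
      by (rule eq_matI) (use A False in \<open>auto simp: y_def field_simps\<close>)
    hence "det (x \<cdot>\<^sub>m 1\<^sub>m n - (c \<cdot>\<^sub>m 1\<^sub>m n - s \<cdot>\<^sub>m A)) = (- s) ^ n * poly (char_poly A) y"
      using A by (simp add: det_smult poly_char_poly_eq_det)
    also have "\<dots> = (\<Prod>a\<in>#m. (- s) * (y - a))"
      unfolding cp poly_prod_mset_linear_factors[where f = "\<lambda>a. a"] prod_mset.distrib
        prod_mset_constant size_m ..
    also have "\<dots> = (\<Prod>a\<in>#m. x - (c - s * a))"
      using False by (intro arg_cong[of _ _ prod_mset] image_mset_cong) (simp add: y_def field_simps)
    finally show ?thesis .
  qed
  moreover have "c \<cdot>\<^sub>m 1\<^sub>m n - s \<cdot>\<^sub>m A \<in> carrier_mat n n" using A by auto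
  ultimately show "poly (char_poly (c \<cdot>\<^sub>m 1\<^sub>m n - s \<cdot>\<^sub>m A)) x = poly (\<Prod>a\<in>#m. [:- (c - s * a), 1:]) x"
    unfolding poly_prod_mset_linear_factors[where f = "\<lambda>a. c - s * a"]
    by (simp only: poly_char_poly_eq_det)
qed

lemma char_poly_four_block_mat_lower_left_zero:
  fixes A :: "'a :: idom mat"
  assumes A: "A \<in> carrier_mat n n" and B: "B \<in> carrier_mat n m" and D: "D \<in> carrier_mat m m"
  shows "char_poly (four_block_mat A B (0\<^sub>m m n) D) = char_poly A * char_poly D"
proof -
  have "char_poly_matrix (four_block_mat A B (0\<^sub>m m n) D) =
      four_block_mat (char_poly_matrix A) (map_mat (\<lambda>a. [:- a:]) B) (0\<^sub>m m n) (char_poly_matrix D)"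
    by (rule eq_matI) (use assms in \<open>auto simp: char_poly_matrix_def\<close>)
  thus ?thesis
    unfolding char_poly_def
    by (simp add: det_four_block_mat_lower_left_zero[OF char_poly_matrix_closed[OF A] _ refl
          char_poly_matrix_closed[OF D]] B)
qed

lemma prod_mset_sum_mset:
  "(\<Prod>a\<in>#(\<Sum>i<(r::nat). A i). f a) = (\<Prod>i<r. \<Prod>a\<in>#A i. (f a :: 'b :: comm_monoid_mult))"
  by (induction r) simp_all

section \<open>Block partitions\<close>

lemma sum_lessThan_add: "(\<Sum>k<a + b. f k) = (\<Sum>k<a. f k) + (\<Sum>k<b. f (a + k :: nat))"
  by (induction b) (auto simp: add.assoc[symmetric])

lemma offset_0 [simp]: "offset n 0 = 0"
  by (simp add: offset_def)

lemma offset_Suc: "offset n (Suc i) = offset n i + n i"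
  by (simp add: offset_def)

lemma offset_mono: "i \<le> j \<Longrightarrow> offset n i \<le> offset n j"
  unfolding offset_def by (rule sum_mono2) auto

lemma offset_add_less:
  assumes "i < r" "u < n i"
  shows "offset n i + u < offset n r"
proof -
  have "offset n i + u < offset n (Suc i)" using assms by (simp add: offset_Suc)
  also have "\<dots> \<le> offset n r" using assms by (intro offset_mono) simp
  finally show ?thesis .
qed

lemma offset_blockE:
  assumes "p < offset n r"
  obtains i u where "i < r" "u < n i" "p = offset n i + u"
  using assms
proof (induction r)
  case (Suc r)
  show ?case
  proof (cases "p < offset n r")
    case True
    thus ?thesis by (metis Suc.IH Suc.prems(1) less_SucI)
  next
    case False
    thus ?thesis using Suc.prems by (intro Suc.prems(1)[of r "p - offset n r"]) (auto simp: offset_Suc)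
  qed
qed (simp add: offset_def)

definition block_of :: "(nat \<Rightarrow> nat) \<Rightarrow> nat \<Rightarrow> nat" where
  "block_of n p = (LEAST i. p < offset n (Suc i))"

lemma block_of_offset_add:
  assumes "u < n i"
  shows "block_of n (offset n i + u) = i"
  unfolding block_of_def
proof (rule Least_equality)
  show "offset n i + u < offset n (Suc i)" using assms by (simp add: offset_Suc)
next
  fix j assume "offset n i + u < offset n (Suc j)"
  thus "i \<le> j" using offset_mono[of "Suc j" i n] by (cases "j < i") auto
qed

lemma offset_add_inject:
  assumes "u < n i" "v < n j"
  shows "offset n i + u = offset n j + v \<longleftrightarrow> i = j \<and> u = v"
  using block_of_offset_add[of u n i] block_of_offset_add[of v n j] assms by auto

lemma sum_offset_blocks:
  "(\<Sum>p<offset n r. f p) = (\<Sum>i<r. \<Sum>u<n i. f (offset n i + u))"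
  by (induction r) (simp_all add: offset_Suc sum_lessThan_add)

definition diag_block :: "(nat \<Rightarrow> nat) \<Rightarrow> nat \<Rightarrow> 'a mat \<Rightarrow> 'a mat" where
  "diag_block n i M = mat (n i) (n i) (\<lambda>(u, v). M $$ (offset n i + u, offset n i + v))"

lemma char_poly_block_upper_triangular:
  fixes W :: "'a :: idom mat"
  assumes "W \<in> carrier_mat (offset n r) (offset n r)"
    and "\<And>i j u v. j < i \<Longrightarrow> i < r \<Longrightarrow> u < n i \<Longrightarrow> v < n j \<Longrightarrow>
      W $$ (offset n i + u, offset n j + v) = 0"
  shows "char_poly W = (\<Prod>i<r. char_poly (diag_block n i W))"
  using assms
proof (induction r arbitrary: W)
  case 0
  hence "W = 1\<^sub>m 0" by (intro eq_matI) auto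
  thus ?case by (simp add: char_poly_def char_poly_matrix_def)
next
  case (Suc r)
  let ?o = "offset n r"
  define W1 where "W1 = mat ?o ?o (\<lambda>(a, b). W $$ (a, b))"
  define W2 where "W2 = mat ?o (n r) (\<lambda>(a, b). W $$ (a, ?o + b))"
  have W1: "W1 \<in> carrier_mat ?o ?o" and W2: "W2 \<in> carrier_mat ?o (n r)"
    and Wr: "diag_block n r W \<in> carrier_mat (n r) (n r)"
    by (simp_all add: W1_def W2_def diag_block_def)
  have "W = four_block_mat W1 W2 (0\<^sub>m (n r) ?o) (diag_block n r W)"
  proof (rule eq_matI)
    fix a b assume "a < dim_row (four_block_mat W1 W2 (0\<^sub>m (n r) ?o) (diag_block n r W))"
      "b < dim_col (four_block_mat W1 W2 (0\<^sub>m (n r) ?o) (diag_block n r W))"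
    hence a: "a < ?o + n r" and b: "b < ?o + n r" by (simp_all add: W1_def diag_block_def)
    have "W $$ (a, b) = 0" if "?o \<le> a" "b < ?o"
    proof -
      obtain j v where "j < r" "v < n j" "b = offset n j + v" using \<open>b < ?o\<close> by (rule offset_blockE)
      thus ?thesis using Suc.prems(2)[of j r "a - ?o" v] that a by simp
    qed
    thus "W $$ (a, b) = four_block_mat W1 W2 (0\<^sub>m (n r) ?o) (diag_block n r W) $$ (a, b)"
      using a b by (auto simp: W1_def W2_def diag_block_def)
  qed (use Suc.prems(1) in \<open>auto simp: W1_def diag_block_def offset_Suc\<close>)
  hence "char_poly W = char_poly W1 * char_poly (diag_block n r W)"
    using char_poly_four_block_mat_lower_left_zero[OF W1 W2 Wr] by simp
  moreover have "char_poly W1 = (\<Prod>i<r. char_poly (diag_block n i W1))"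
  proof (rule Suc.IH[OF W1])
    fix i j u v assume "j < i" "i < r" "u < n i" "v < n j"
    thus "W1 $$ (offset n i + u, offset n j + v) = 0"
      using Suc.prems(2)[of j i u v] offset_add_less[of i r u n] offset_add_less[of j r v n]
      by (simp add: W1_def)
  qed
  moreover have "diag_block n i W1 = diag_block n i W" if "i < r" for i
    using that offset_add_less[of i r _ n] by (intro eq_matI) (auto simp: W1_def diag_block_def)
  ultimately show ?case by simp
qed

section \<open>Equitable partitions\<close>

text \<open>The tail of a block consists of all its vertices but the first; the tail vertices are numbered
  consecutively, block by block.\<close>
definition tail_sizes :: "(nat \<Rightarrow> nat) \<Rightarrow> nat \<Rightarrow> nat" where
  "tail_sizes n i = n i - 1"

definition tail_vertex :: "(nat \<Rightarrow> nat) \<Rightarrow> nat \<Rightarrow> nat" where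
  "tail_vertex n t =
     (let i = block_of (tail_sizes n) t in offset n i + Suc (t - offset (tail_sizes n) i))"

lemma tail_vertex_offset_add:
  "u < n i - 1 \<Longrightarrow> tail_vertex n (offset (tail_sizes n) i + u) = offset n i + Suc u"
  using block_of_offset_add[of u "tail_sizes n" i] by (simp add: tail_vertex_def tail_sizes_def)

text \<open>When the span of the block indicator vectors is invariant under \<open>M\<close>, \<open>deflate r n M\<close> is the
  matrix of the map induced by \<open>M\<close> on the quotient by that span, in the basis formed by the images
  of all unit vectors except the first one of each block.\<close>
definition deflate :: "nat \<Rightarrow> (nat \<Rightarrow> nat) \<Rightarrow> 'a :: comm_ring_1 mat \<Rightarrow> 'a mat" where
  "deflate r n M = mat (offset (tail_sizes n) r) (offset (tail_sizes n) r) (\<lambda>(a, b).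
     M $$ (tail_vertex n a, tail_vertex n b)
     - M $$ (offset n (block_of (tail_sizes n) a), tail_vertex n b))"

lemma deflate_carrier: "deflate r n M \<in> carrier_mat (offset (tail_sizes n) r) (offset (tail_sizes n) r)"
  by (simp add: deflate_def)

lemma deflate_entry:
  assumes "i < r" "u < n i - 1" "j < r" "v < n j - 1"
  shows "deflate r n M $$ (offset (tail_sizes n) i + u, offset (tail_sizes n) j + v) =
    M $$ (offset n i + Suc u, offset n j + Suc v) - M $$ (offset n i, offset n j + Suc v)"
proof -
  have "offset (tail_sizes n) i + u < offset (tail_sizes n) r"
    "offset (tail_sizes n) j + v < offset (tail_sizes n) r"
    using assms by (auto intro: offset_add_less simp: tail_sizes_def)
  thus ?thesis
    using assms block_of_offset_add[of u "tail_sizes n" i]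
    by (simp add: deflate_def tail_vertex_offset_add tail_sizes_def)
qed

text \<open>The columns of \<open>indicator_basis r n\<close> are the normalised indicator vectors of the \<open>r\<close> blocks
  followed by the unit vectors of the tail vertices; \<open>indicator_cobasis r n\<close> is its inverse.\<close>
definition indicator_basis :: "nat \<Rightarrow> (nat \<Rightarrow> nat) \<Rightarrow> real mat" where
  "indicator_basis r n = mat (offset n r) (offset n r) (\<lambda>(p, c).
     if c < r then (if block_of n p = c then 1 / sqrt (n c) else 0)
     else if p = tail_vertex n (c - r) then 1 else 0)"

definition indicator_cobasis :: "nat \<Rightarrow> (nat \<Rightarrow> nat) \<Rightarrow> real mat" where
  "indicator_cobasis r n = mat (offset n r) (offset n r) (\<lambda>(c, p).
     if c < r then (if p = offset n c then sqrt (n c) else 0)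
     else if p = tail_vertex n (c - r) then 1
     else if p = offset n (block_of (tail_sizes n) (c - r)) then -1 else 0)"

context
  fixes r :: nat and n :: "nat \<Rightarrow> nat"
  assumes pos: "\<And>i. i < r \<Longrightarrow> 0 < n i"
begin

private abbreviation "P \<equiv> indicator_basis r n"
private abbreviation "Q \<equiv> indicator_cobasis r n"

lemma offset_eq_add_offset_tail_sizes: "offset n r = r + offset (tail_sizes n) r"
  using pos by (induction r) (auto simp: offset_Suc offset_def tail_sizes_def)

lemma head_or_tail_indexE:
  assumes c: "c < offset n r"
  obtains "c < r"
    | j v where "j < r" "v < n j - 1" "c = r + (offset (tail_sizes n) j + v)"
proof (cases "c < r")
  case False
  hence "c - r < offset (tail_sizes n) r" using c offset_eq_add_offset_tail_sizes by simp
  then obtain j v where "j < r" "v < tail_sizes n j" "c - r = offset (tail_sizes n) j + v"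
    by (rule offset_blockE)
  thus ?thesis using False that(2) by (simp add: tail_sizes_def)
qed


lemma block_count_le_offset: "r \<le> offset n r"
  using offset_eq_add_offset_tail_sizes by simp

lemma tail_index_less:
  assumes "j < r" "v < n j - 1"
  shows "r + (offset (tail_sizes n) j + v) < offset n r"
  using offset_add_less[of j r v "tail_sizes n"] assms offset_eq_add_offset_tail_sizes
  by (simp add: tail_sizes_def)

lemma indicator_basis_head_col:
  assumes "i < r" "u < n i" "c < r"
  shows "P $$ (offset n i + u, c) = (if i = c then 1 / sqrt (n c) else 0)"
  using assms offset_add_less[of i r u n] block_count_le_offset
  by (simp add: indicator_basis_def block_of_offset_add)

lemma indicator_basis_tail_col:
  assumes "i < r" "u < n i" "j < r" "v < n j - 1"
  shows "P $$ (offset n i + u, r + (offset (tail_sizes n) j + v)) = (if i = j \<and> u = Suc v then 1 else 0)"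
  using assms offset_add_less[of i r u n] tail_index_less[of j v] offset_add_inject[of u n i "Suc v" j]
  by (simp add: indicator_basis_def tail_vertex_offset_add)

lemma indicator_cobasis_head_row:
  assumes X: "X \<in> carrier_mat (offset n r) m" and c: "c < r" and k: "k < m"
  shows "(Q * X) $$ (c, k) = sqrt (n c) * X $$ (offset n c, k)"
proof -
  have head: "offset n c < offset n r" using offset_add_less[of c r 0 n] c pos by simp
  have "(Q * X) $$ (c, k) = (\<Sum>p<offset n r. (if p = offset n c then sqrt (n c) else 0) * X $$ (p, k))"
    using X c k head block_count_le_offset
    by (auto simp: indicator_cobasis_def scalar_prod_def lessThan_atLeast0 intro!: sum.cong)
  also have "\<dots> = sqrt (n c) * X $$ (offset n c, k)"
    using head by (simp add: if_distrib[of "\<lambda>x. x * _"] sum.delta cong: if_cong)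
  finally show ?thesis .
qed

lemma indicator_cobasis_tail_row:
  assumes X: "X \<in> carrier_mat (offset n r) m" and j: "j < r" "v < n j - 1" and k: "k < m"
  shows "(Q * X) $$ (r + (offset (tail_sizes n) j + v), k) = X $$ (offset n j + Suc v, k) - X $$ (offset n j, k)"
proof -
  let ?c = "r + (offset (tail_sizes n) j + v)"
  have c: "?c < offset n r" using tail_index_less[OF j] .
  have blocks: "offset n j + Suc v < offset n r" "offset n j < offset n r"
    using j offset_add_less[of j r "Suc v" n] offset_add_less[of j r 0 n] by auto
  have "(Q * X) $$ (?c, k) = (\<Sum>p<offset n r.
      (if p = offset n j + Suc v then X $$ (p, k) else 0) - (if p = offset n j then X $$ (p, k) else 0))"
    using X c k j block_of_offset_add[of v "tail_sizes n" j]
    by (auto simp: indicator_cobasis_def scalar_prod_def lessThan_atLeast0 tail_vertex_offset_add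
        tail_sizes_def intro!: sum.cong)
  also have "\<dots> = X $$ (offset n j + Suc v, k) - X $$ (offset n j, k)"
    using blocks by (simp add: sum_subtractf)
  finally show ?thesis .
qed

lemma mult_indicator_basis_head_col:
  assumes M: "M \<in> carrier_mat m (offset n r)" and p: "p < m" and c: "c < r"
  shows "(M * P) $$ (p, c) = (\<Sum>w<n c. M $$ (p, offset n c + w)) / sqrt (n c)"
proof -
  have "(M * P) $$ (p, c) = (\<Sum>k<offset n r. M $$ (p, k) * P $$ (k, c))"
    using M p c block_count_le_offset
    by (auto simp: indicator_basis_def scalar_prod_def lessThan_atLeast0 intro!: sum.cong)
  also have "\<dots> = (\<Sum>i<r. if i = c then (\<Sum>w<n c. M $$ (p, offset n c + w)) / sqrt (n c) else 0)"
    unfolding sum_offset_blocks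
    by (intro sum.cong) (auto simp: indicator_basis_head_col c sum_divide_distrib)
  also have "\<dots> = (\<Sum>w<n c. M $$ (p, offset n c + w)) / sqrt (n c)"
    using c by simp
  finally show ?thesis .
qed

lemma mult_indicator_basis_tail_col:
  assumes M: "M \<in> carrier_mat m (offset n r)" and p: "p < m" and j: "j < r" "v < n j - 1"
  shows "(M * P) $$ (p, r + (offset (tail_sizes n) j + v)) = M $$ (p, offset n j + Suc v)"
proof -
  have "offset n j + Suc v < offset n r" using j offset_add_less[of j r "Suc v" n] by simp
  moreover have "tail_vertex n (offset (tail_sizes n) j + v) = offset n j + Suc v"
    using tail_vertex_offset_add j(2) .
  ultimately show ?thesis
    using M p tail_index_less[OF j]
    by (auto simp: indicator_basis_def scalar_prod_def lessThan_atLeast0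
        if_distrib[of "\<lambda>x. _ * x"] sum.delta cong: if_cong)
qed

lemma indicator_basis_carrier: "P \<in> carrier_mat (offset n r) (offset n r)"
  by (simp add: indicator_basis_def)

lemma indicator_cobasis_carrier: "Q \<in> carrier_mat (offset n r) (offset n r)"
  by (simp add: indicator_cobasis_def)

lemma tail_index_inject:
  assumes "v < n j - 1" "v' < n j' - 1"
  shows "r + (offset (tail_sizes n) j + v) = r + (offset (tail_sizes n) j' + v') \<longleftrightarrow> j = j' \<and> v = v'"
  using offset_add_inject[of v "tail_sizes n" j v' j'] assms by (simp add: tail_sizes_def)

lemma indicator_cobasis_mult_basis: "Q * P = 1\<^sub>m (offset n r)"
proof (rule eq_matI)
  fix c c' assume "c < dim_row (1\<^sub>m (offset n r))" "c' < dim_col (1\<^sub>m (offset n r))"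
  hence c: "c < offset n r" and c': "c' < offset n r" by auto
  show "(Q * P) $$ (c, c') = 1\<^sub>m (offset n r) $$ (c, c')"
  proof (cases rule: head_or_tail_indexE[OF c])
    case 1
    hence "(Q * P) $$ (c, c') = sqrt (n c) * P $$ (offset n c, c')"
      using indicator_cobasis_head_row[OF indicator_basis_carrier _ c'] by simp
    also have "\<dots> = 1\<^sub>m (offset n r) $$ (c, c')"
    proof (cases rule: head_or_tail_indexE[OF c'])
      case 1
      thus ?thesis using \<open>c < r\<close> c c' pos[of c] indicator_basis_head_col[of c 0 c'] by auto
    next
      case (2 j' v')
      thus ?thesis using \<open>c < r\<close> c c' pos[of c] indicator_basis_tail_col[of c 0 j' v'] by simp
    qed
    finally show ?thesis .
  next
    case (2 j v)
    hence "(Q * P) $$ (c, c') = P $$ (offset n j + Suc v, c') - P $$ (offset n j, c')"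
      using indicator_cobasis_tail_row[OF indicator_basis_carrier _ _ c'] by simp
    also have "\<dots> = 1\<^sub>m (offset n r) $$ (c, c')"
    proof (cases rule: head_or_tail_indexE[OF c'])
      case 1
      thus ?thesis using 2 c c' indicator_basis_head_col[of j 0 c'] indicator_basis_head_col[of j "Suc v" c']
        by simp
    next
      case (2 j' v')
      thus ?thesis
        using \<open>j < r\<close> \<open>v < n j - 1\<close> \<open>c = _\<close> c c' tail_index_inject[of v j v' j']
          indicator_basis_tail_col[of j 0 j' v'] indicator_basis_tail_col[of j "Suc v" j' v']
        by simp
    qed
    finally show ?thesis .
  qed
qed (simp_all add: indicator_basis_def indicator_cobasis_def)

text \<open>The row sums of \<open>M\<close> over blocks are constant on each block; \<open>F\<close> is the quotient matrix
  of these row sums, symmetrised by conjugation with \<open>diag (sqrt (n i))\<close>.\<close>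
context
  fixes M F :: "real mat"
  assumes M: "M \<in> carrier_mat (offset n r) (offset n r)" and F: "F \<in> carrier_mat r r"
    and rowsum: "\<And>i j u. i < r \<Longrightarrow> j < r \<Longrightarrow> u < n i \<Longrightarrow>
      (\<Sum>w<n j. M $$ (offset n i + u, offset n j + w)) = F $$ (i, j) * sqrt (n j) / sqrt (n i)"
begin

lemma mult_indicator_basis_carrier: "M * P \<in> carrier_mat (offset n r) (offset n r)"
  using M indicator_basis_carrier by (rule mult_carrier_mat)

lemma mult_indicator_basis_head_col_equitable:
  assumes "i < r" "u < n i" "c < r"
  shows "(M * P) $$ (offset n i + u, c) = F $$ (i, c) / sqrt (n i)"
  using assms pos[of c] offset_add_less[of i r u n]
  by (simp add: mult_indicator_basis_head_col[OF M] rowsum)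

lemma indicator_cobasis_mult_mult_basis_head_row:
  assumes c: "c < r" and c': "c' < offset n r"
  shows "(Q * (M * P)) $$ (c, c') =
    (if c' < r then F $$ (c, c') else sqrt (n c) * M $$ (offset n c, tail_vertex n (c' - r)))"
proof -
  have "(Q * (M * P)) $$ (c, c') = sqrt (n c) * (M * P) $$ (offset n c, c')"
    using indicator_cobasis_head_row[OF mult_indicator_basis_carrier c c'] .
  also have "\<dots> = (if c' < r then F $$ (c, c') else sqrt (n c) * M $$ (offset n c, tail_vertex n (c' - r)))"
  proof (cases rule: head_or_tail_indexE[OF c'])
    case 1
    thus ?thesis using c pos[of c] mult_indicator_basis_head_col_equitable[of c 0 c'] by simp
  next
    case (2 j' v')
    thus ?thesis
      using c pos[of c] tail_vertex_offset_add[of v' n j'] offset_add_less[of c r 0 n]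
      by (simp add: mult_indicator_basis_tail_col[OF M])
  qed
  finally show ?thesis .
qed

lemma indicator_cobasis_mult_mult_basis_tail_row:
  assumes j: "j < r" "v < n j - 1" and c': "c' < offset n r"
  shows "(Q * (M * P)) $$ (r + (offset (tail_sizes n) j + v), c') =
    (if c' < r then 0 else deflate r n M $$ (offset (tail_sizes n) j + v, c' - r))"
proof -
  have "(Q * (M * P)) $$ (r + (offset (tail_sizes n) j + v), c') =
      (M * P) $$ (offset n j + Suc v, c') - (M * P) $$ (offset n j, c')"
    using indicator_cobasis_tail_row[OF mult_indicator_basis_carrier j c'] .
  also have "\<dots> = (if c' < r then 0 else deflate r n M $$ (offset (tail_sizes n) j + v, c' - r))"
  proof (cases rule: head_or_tail_indexE[OF c'])
    case 1
    thus ?thesis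
      using j mult_indicator_basis_head_col_equitable[of j 0 c']
        mult_indicator_basis_head_col_equitable[of j "Suc v" c']
      by simp
  next
    case (2 j' v')
    thus ?thesis
      using j offset_add_less[of j r "Suc v" n] offset_add_less[of j r 0 n]
      by (simp add: mult_indicator_basis_tail_col[OF M] deflate_entry)
  qed
  finally show ?thesis .
qed

lemma indicator_cobasis_mult_mult_basis:
  defines "Y \<equiv> mat r (offset (tail_sizes n) r)
    (\<lambda>(i, t). sqrt (n i) * M $$ (offset n i, tail_vertex n t))"
  shows "Q * (M * P) = four_block_mat F Y (0\<^sub>m (offset (tail_sizes n) r) r) (deflate r n M)"
    (is "_ = ?T")
proof (rule eq_matI)
  fix c c' assume "c < dim_row ?T" "c' < dim_col ?T"
  hence c: "c < offset n r" and c': "c' < offset n r"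
    using F offset_eq_add_offset_tail_sizes by (auto simp: Y_def deflate_def)
  have T_entry: "?T $$ (c, c') = (if c < r then if c' < r then F $$ (c, c') else Y $$ (c, c' - r)
      else if c' < r then 0 else deflate r n M $$ (c - r, c' - r))"
    using c c' F offset_eq_add_offset_tail_sizes
    by (subst index_mat_four_block) (auto simp: Y_def deflate_def)
  show "(Q * (M * P)) $$ (c, c') = ?T $$ (c, c')"
  proof (cases rule: head_or_tail_indexE[OF c])
    case 1
    thus ?thesis using c' T_entry offset_eq_add_offset_tail_sizes
      by (simp add: indicator_cobasis_mult_mult_basis_head_row Y_def)
  next
    case (2 j v)
    thus ?thesis using c' T_entry by (simp add: indicator_cobasis_mult_mult_basis_tail_row)
  qed
qed (use F offset_eq_add_offset_tail_sizes in
      \<open>simp_all add: Y_def deflate_def indicator_cobasis_def indicator_basis_def\<close>)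

theorem char_poly_equitable_partition: "char_poly M = char_poly F * char_poly (deflate r n M)"
proof -
  define Y where
    "Y = mat r (offset (tail_sizes n) r) (\<lambda>(i, t). sqrt (n i) * M $$ (offset n i, tail_vertex n t))"
  define T where "T = four_block_mat F Y (0\<^sub>m (offset (tail_sizes n) r) r) (deflate r n M)"
  have T: "T = Q * (M * P)"
    unfolding T_def Y_def by (rule indicator_cobasis_mult_mult_basis[symmetric])
  have QP: "Q * P = 1\<^sub>m (offset n r)" by (rule indicator_cobasis_mult_basis)
  have PQ: "P * Q = 1\<^sub>m (offset n r)"
    by (rule mat_mult_left_right_inverse[OF indicator_cobasis_carrier indicator_basis_carrier QP])
  note carriers = M indicator_basis_carrier indicator_cobasis_carrier
  have "P * T = (P * Q) * (M * P)"
    unfolding T by (rule assoc_mult_mat[symmetric]) (use carriers in auto)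
  hence "P * T * Q = M * P * Q" using carriers by (simp add: PQ)
  also have "\<dots> = M * (P * Q)" by (rule assoc_mult_mat) (use carriers in auto)
  also have "\<dots> = M" using M by (simp add: PQ)
  finally have "similar_mat M T"
    using carriers QP PQ
    by (intro similar_matI[of _ _ _ _ "offset n r"]) (auto simp: T)
  hence "char_poly M = char_poly T" by (rule char_poly_similar)
  also have "\<dots> = char_poly F * char_poly (deflate r n M)"
    unfolding T_def using F
    by (rule char_poly_four_block_mat_lower_left_zero) (simp_all add: Y_def deflate_carrier)
  finally show ?thesis .
qed

end

end

corollary char_poly_const_row_sums:
  fixes A :: "real mat"
  assumes A: "A \<in> carrier_mat k k" and k: "0 < k"
    and rows: "\<And>u. u < k \<Longrightarrow> (\<Sum>v<k. A $$ (u, v)) = c"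
  shows "char_poly A = [:- c, 1:] * char_poly (deflate 1 (\<lambda>_. k) A)"
proof -
  have "char_poly A = char_poly (mat 1 1 (\<lambda>_. c)) * char_poly (deflate 1 (\<lambda>_. k) A)"
  proof (rule char_poly_equitable_partition)
    fix i j u assume "i < (1::nat)" "j < (1::nat)" "u < k"
    thus "(\<Sum>w<k. A $$ (offset (\<lambda>_. k) i + u, offset (\<lambda>_. k) j + w)) =
        mat 1 1 (\<lambda>_. c) $$ (i, j) * sqrt k / sqrt k"
      using k rows by simp
  qed (use A k in \<open>simp_all add: offset_def\<close>)
  moreover have "char_poly (mat 1 1 (\<lambda>_. c)) = [:- c, 1:]"
    by (simp add: char_poly_def char_poly_matrix_def det_single)
  ultimately show ?thesis by simp
qed

lemma diag_block_deflate:
  assumes "i < r"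
  shows "diag_block (tail_sizes n) i (deflate r n M) = deflate 1 (\<lambda>_. n i) (diag_block n i M)"
proof (rule eq_matI)
  fix u v assume "u < dim_row (deflate 1 (\<lambda>_. n i) (diag_block n i M))"
    "v < dim_col (deflate 1 (\<lambda>_. n i) (diag_block n i M))"
  hence u: "u < n i - 1" and v: "v < n i - 1" by (simp_all add: deflate_def tail_sizes_def offset_def)
  have "deflate 1 (\<lambda>_. n i) (diag_block n i M) $$ (u, v) =
      diag_block n i M $$ (Suc u, Suc v) - diag_block n i M $$ (0, Suc v)"
    using deflate_entry[of 0 1 u "\<lambda>_. n i" 0 v] u v by simp
  also have "\<dots> = deflate r n M $$ (offset (tail_sizes n) i + u, offset (tail_sizes n) i + v)"
    using u v assms by (simp add: diag_block_def deflate_entry)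
  finally show "diag_block (tail_sizes n) i (deflate r n M) $$ (u, v) =
      deflate 1 (\<lambda>_. n i) (diag_block n i M) $$ (u, v)"
    using u v by (simp add: diag_block_def tail_sizes_def)
qed (simp_all add: diag_block_def deflate_def tail_sizes_def offset_def)

lemma char_poly_deflate_const_off_diag_blocks:
  fixes M :: "'a :: idom mat"
  assumes const: "\<And>i j u u' v. j < i \<Longrightarrow> i < r \<Longrightarrow> u < n i \<Longrightarrow> u' < n i \<Longrightarrow> v < n j \<Longrightarrow>
      M $$ (offset n i + u, offset n j + v) = M $$ (offset n i + u', offset n j + v)"
  shows "char_poly (deflate r n M) = (\<Prod>i<r. char_poly (deflate 1 (\<lambda>_. n i) (diag_block n i M)))"
proof -
  have "char_poly (deflate r n M) = (\<Prod>i<r. char_poly (diag_block (tail_sizes n) i (deflate r n M)))"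
  proof (rule char_poly_block_upper_triangular[OF deflate_carrier])
    fix i j u v assume "j < i" "i < r" "u < tail_sizes n i" "v < tail_sizes n j"
    thus "deflate r n M $$ (offset (tail_sizes n) i + u, offset (tail_sizes n) j + v) = 0"
      using const[of j i "Suc u" 0 "Suc v"] by (simp add: deflate_entry tail_sizes_def)
  qed
  thus ?thesis by (simp add: diag_block_deflate)
qed

lemma char_poly_deflate_affine_const_row_sums:
  fixes A :: "real mat" and e :: "nat \<Rightarrow> real"
  assumes A: "A \<in> carrier_mat k k" and k: "0 < k"
    and rows: "\<And>u. u < k \<Longrightarrow> (\<Sum>v<k. A $$ (u, v)) = e 0"
    and cp: "char_poly A = (\<Prod>a\<in>#mset (map e [0..<k]). [:- a, 1:])"
  shows "char_poly (deflate 1 (\<lambda>_. k) (c \<cdot>\<^sub>m 1\<^sub>m k - s \<cdot>\<^sub>m A)) =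
    (\<Prod>a\<in>#mset (map e [1..<k]). [:- (c - s * a), 1:])"
proof -
  let ?B = "c \<cdot>\<^sub>m 1\<^sub>m k - s \<cdot>\<^sub>m A"
  have "(\<Sum>v<k. ?B $$ (u, v)) = c - s * e 0" if "u < k" for u
  proof -
    have "(\<Sum>v<k. ?B $$ (u, v)) = (\<Sum>v<k. (if v = u then c else 0) - s * A $$ (u, v))"
      using A that by (intro sum.cong) auto
    also have "\<dots> = c - s * e 0"
      using that rows[OF that] by (simp add: sum_subtractf sum_distrib_left[symmetric])
    finally show ?thesis .
  qed
  hence "char_poly ?B = [:- (c - s * e 0), 1:] * char_poly (deflate 1 (\<lambda>_. k) ?B)"
    using A k by (intro char_poly_const_row_sums) auto
  moreover have "char_poly ?B = [:- (c - s * e 0), 1:] * (\<Prod>a\<in>#mset (map e [1..<k]). [:- (c - s * a), 1:])"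
    using char_poly_affine[OF A cp] k by (simp add: upt_conv_Cons)
  ultimately have "[:- (c - s * e 0), 1:] * char_poly (deflate 1 (\<lambda>_. k) ?B) =
      [:- (c - s * e 0), 1:] * (\<Prod>a\<in>#mset (map e [1..<k]). [:- (c - s * a), 1:])"
    by (rule trans[OF sym])
  thus ?thesis by (rule mult_left_cancel[THEN iffD1, rotated]) simp
qed

section \<open>Deformed Laplacians of joins\<close>

lemma deformed_lap_carrier: "deformed_lap n E s \<in> carrier_mat n n"
  unfolding deformed_lap_def adj_mat_def deg_mat_def by auto

lemma adj_mat_carrier: "adj_mat n E \<in> carrier_mat n n"
  by (simp add: adj_mat_def)

lemma transpose_adj_mat: "simple_graph n E \<Longrightarrow> transpose_mat (adj_mat n E) = adj_mat n E"
  by (rule eq_matI) (auto simp: adj_mat_def simple_graph_def)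

lemma adj_mat_row_sum:
  assumes "regular n E d" "u < n"
  shows "(\<Sum>v<n. adj_mat n E $$ (u, v)) = d"
proof -
  have "d = card {v. v < n \<and> E u v}" using assms unfolding regular_def degree_def by auto
  thus ?thesis using assms(2) by (simp add: adj_mat_def sum.If_cases Int_def conj_commute)
qed

lemma hjoin_E_offset_add:
  assumes "i < r" "j < r" "u < n i" "v < n j"
  shows "hjoin_E r H n E (offset n i + u) (offset n j + v) \<longleftrightarrow> (i = j \<and> E i u v) \<or> H i j"
  using assms offset_add_inject[of _ n] unfolding hjoin_E_def by (smt (verit))

lemma degree_hjoin:
  assumes irrefl: "irreflp H" and i: "i < r" and u: "u < n i"
    and reg: "regular (n i) (E i) (d i)"
  shows "degree (offset n r) (hjoin_E r H n E) (offset n i + u) = d i + (\<Sum>j | j < r \<and> H i j. n j)"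
proof -
  let ?G = "hjoin_E r H n E"
  have "degree (offset n r) ?G (offset n i + u) = (\<Sum>w<offset n r. if ?G (offset n i + u) w then 1 else 0)"
    unfolding degree_def by (simp add: sum.If_cases Int_def conj_commute)
  also have "\<dots> = (\<Sum>j<r. \<Sum>v<n j. if (i = j \<and> E i u v) \<or> H i j then 1 else 0)"
    unfolding sum_offset_blocks using i u by (intro sum.cong refl) (simp add: hjoin_E_offset_add)
  also have "\<dots> = (\<Sum>j<r. (if j = i then d i else 0) + (if H i j then n j else 0))"
  proof (intro sum.cong refl)
    fix j assume "j \<in> {..<r}"
    have "d i = card {v. v < n i \<and> E i u v}" using reg u unfolding regular_def degree_def by auto
    thus "(\<Sum>v<n j. if (i = j \<and> E i u v) \<or> H i j then 1 else 0) =
        (if j = i then d i else 0) + (if H i j then n j else 0)"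
      using irreflpD[OF irrefl, of i] by (auto simp: sum.If_cases Int_def conj_commute)
  qed
  also have "\<dots> = d i + (\<Sum>j | j < r \<and> H i j. n j)"
    using i by (simp add: sum.distrib sum.If_cases Int_def conj_commute)
  finally show ?thesis .
qed

context
  fixes r :: nat and H :: "nat \<Rightarrow> nat \<Rightarrow> bool" and n d :: "nat \<Rightarrow> nat"
    and E :: "nat \<Rightarrow> nat \<Rightarrow> nat \<Rightarrow> bool" and s :: real
  assumes irrefl: "irreflp H"
begin

lemma deformed_lap_hjoin_entry:
  assumes "i < r" "j < r" "u < n i" "v < n j" and reg: "regular (n i) (E i) (d i)"
  shows "deformed_lap (offset n r) (hjoin_E r H n E) s $$ (offset n i + u, offset n j + v) =
    (if i = j \<and> u = v then s\<^sup>2 * (real (d i + (\<Sum>k | k < r \<and> H i k. n k)) - 1) + 1 else 0)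
    - (if (i = j \<and> E i u v) \<or> H i j then s else 0)"
  using assms offset_add_less[of i r u n] offset_add_less[of j r v n] offset_add_inject[of u n i v j]
    degree_hjoin[of H i r u n E d, OF irrefl assms(1,3) reg] hjoin_E_offset_add[OF assms(1-4), of H E]
  by (auto simp: deformed_lap_def adj_mat_def deg_mat_def algebra_simps)

lemma diag_block_deformed_lap_hjoin:
  assumes "i < r" and reg: "regular (n i) (E i) (d i)"
  shows "diag_block n i (deformed_lap (offset n r) (hjoin_E r H n E) s) =
    (s\<^sup>2 * (real (d i + (\<Sum>k | k < r \<and> H i k. n k)) - 1) + 1) \<cdot>\<^sub>m 1\<^sub>m (n i) - s \<cdot>\<^sub>m adj_mat (n i) (E i)"
  using assms irreflpD[OF irrefl, of i]
  by (intro eq_matI) (auto simp: diag_block_def deformed_lap_hjoin_entry[OF _ _ _ _ reg] adj_mat_def)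

lemma deformed_lap_hjoin_block_row_sum:
  assumes "i < r" "j < r" "u < n i" and reg: "regular (n i) (E i) (d i)"
  shows "(\<Sum>w<n j. deformed_lap (offset n r) (hjoin_E r H n E) s $$ (offset n i + u, offset n j + w)) =
    (if i = j then s\<^sup>2 * (real (d i + (\<Sum>k | k < r \<and> H i k. n k)) - 1) + 1 - s * d i
     else if H i j then - s * n j else 0)"
proof (cases "i = j")
  case True
  let ?c = "s\<^sup>2 * (real (d i + (\<Sum>k | k < r \<and> H i k. n k)) - 1) + 1"
  have "d i = card {w. w < n i \<and> E i u w}" using reg assms unfolding regular_def degree_def by auto
  hence deg: "real (d i) = (\<Sum>w<n i. if E i u w then 1 else 0)"
    by (simp add: sum.If_cases Int_def conj_commute)
  have "(\<Sum>w<n i. deformed_lap (offset n r) (hjoin_E r H n E) s $$ (offset n i + u, offset n i + w)) =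
      (\<Sum>w<n i. (if w = u then ?c else 0) - s * (if E i u w then 1 else 0))"
    using irreflpD[OF irrefl, of i]
    by (intro sum.cong refl) (simp add: deformed_lap_hjoin_entry[OF assms(1,1,3) _ reg])
  also have "\<dots> = ?c - s * d i"
    using assms by (simp add: sum_subtractf deg sum_distrib_left)
  finally show ?thesis unfolding True[symmetric] by simp
qed (use assms in \<open>simp add: deformed_lap_hjoin_entry[OF _ _ _ _ reg]\<close>)

end

lemma char_poly_deflate_diag_block_hjoin:
  fixes e :: "nat \<Rightarrow> real"
  assumes H: "irreflp H" and i: "i < r" and pos: "0 < n i" and G: "simple_graph (n i) (E i)"
    and reg: "regular (n i) (E i) (d i)"
    and spec: "spec (adj_mat (n i) (E i)) = mset (map e [0..<n i])" and e0: "e 0 = d i"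
  shows "char_poly (deflate 1 (\<lambda>_. n i) (diag_block n i (deformed_lap (offset n r) (hjoin_E r H n E) s))) =
    (\<Prod>a\<in>#mset (map e [1..<n i]). [:- (s\<^sup>2 * (real (d i + (\<Sum>k | k < r \<and> H i k. n k)) - 1) + 1 - s * a), 1:])"
  unfolding diag_block_deformed_lap_hjoin[where n = n and E = E and d = d, OF H i reg]
proof (rule char_poly_deflate_affine_const_row_sums[OF adj_mat_carrier pos])
  show "(\<Sum>v<n i. adj_mat (n i) (E i) $$ (u, v)) = e 0" if "u < n i" for u
    using adj_mat_row_sum[OF reg that] e0 by simp
  show "char_poly (adj_mat (n i) (E i)) = (\<Prod>a\<in>#mset (map e [0..<n i]). [:- a, 1:])"
    using char_poly_spec_real_symmetric[OF adj_mat_carrier transpose_adj_mat[OF G]] spec by simp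
qed

lemma irreflp_cycle_adj: "3 \<le> r \<Longrightarrow> irreflp (cycle_adj r)"
  by (rule irreflpI) (auto simp: cycle_adj_def mod_if split: if_splits)

lemma cycle_adj_iff:
  assumes "3 \<le> r" "i < r" "j < r" "i \<noteq> j"
  shows "cycle_adj r i j \<longleftrightarrow> j = i + 1 \<or> i = j + 1 \<or> (i = 0 \<and> j = r - 1) \<or> (i = r - 1 \<and> j = 0)"
  using assms by (auto simp: cycle_adj_def mod_if)

lemma deformed_lap_cycle_join_block_row_sum:
  assumes r: "3 \<le> r" and ij: "i < r" "j < r" and u: "u < n i"
    and reg: "regular (n i) (E i) (d i)"
  shows "(\<Sum>w<n j. deformed_lap (offset n r) (hjoin_E r (cycle_adj r) n E) s $$
      (offset n i + u, offset n j + w)) = F_mat r n d s $$ (i, j) * sqrt (n j) / sqrt (n i)"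
proof -
  have F: "F_mat r n d s $$ (i, j) =
      (if i = j then lam1M r n d s i else if cycle_adj r i j then - s * sqrt (n i * n j) else 0)"
    using ij cycle_adj_iff[OF r ij] by (simp add: F_mat_def)
  note row_sum = deformed_lap_hjoin_block_row_sum
    [where H = "cycle_adj r" and n = n and E = E and d = d and s = s, OF irreflp_cycle_adj[OF r] ij u reg]
  have N: "(\<Sum>k | k < r \<and> cycle_adj r i k. n k) = cycN r n i" by (simp add: cycN_def)
  show ?thesis
  proof (cases "i = j")
    case True
    have "(\<Sum>w<n j. deformed_lap (offset n r) (hjoin_E r (cycle_adj r) n E) s $$
        (offset n i + u, offset n j + w)) = s\<^sup>2 * (real (d i + cycN r n i) - 1) + 1 - s * d i"
      using row_sum unfolding True[symmetric] by (simp add: N)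
    also have "\<dots> = lam1M r n d s i" by (simp add: lam1M_def algebra_simps)
    also have "\<dots> = F_mat r n d s $$ (i, j) * sqrt (n j) / sqrt (n i)"
      using F u unfolding True[symmetric] by simp
    finally show ?thesis .
  next
    case False
    have "- s * sqrt (n i * n j) * sqrt (n j) / sqrt (n i) = - s * n j"
      using u by (simp add: real_sqrt_mult real_sqrt_mult_self field_simps)
    thus ?thesis using row_sum False by (simp add: F)
  qed
qed

lemma char_poly_deformed_lap_cycle_join:
  fixes s :: real
  assumes r: "3 \<le> r" and pos: "\<And>i. i < r \<Longrightarrow> 0 < n i"
    and reg: "\<And>i. i < r \<Longrightarrow> regular (n i) (E i) (d i)"
  defines "M \<equiv> deformed_lap (offset n r) (hjoin_E r (cycle_adj r) n E) s"
  shows "char_poly M =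
    char_poly (F_mat r n d s) * (\<Prod>i<r. char_poly (deflate 1 (\<lambda>_. n i) (diag_block n i M)))"
proof -
  have H: "irreflp (cycle_adj r)" using r by (rule irreflp_cycle_adj)
  have "char_poly M = char_poly (F_mat r n d s) * char_poly (deflate r n M)"
  proof (rule char_poly_equitable_partition)
    fix i j u assume "i < r" "j < r" "u < n i"
    thus "(\<Sum>w<n j. M $$ (offset n i + u, offset n j + w)) = F_mat r n d s $$ (i, j) * sqrt (n j) / sqrt (n i)"
      unfolding M_def using reg by (intro deformed_lap_cycle_join_block_row_sum[OF r])
  qed (use pos in \<open>auto simp: M_def deformed_lap_carrier F_mat_def\<close>)
  also have "char_poly (deflate r n M) = (\<Prod>i<r. char_poly (deflate 1 (\<lambda>_. n i) (diag_block n i M)))"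
  proof (rule char_poly_deflate_const_off_diag_blocks)
    fix i j u u' v assume "j < i" "i < r" "u < n i" "u' < n i" "v < n j"
    thus "M $$ (offset n i + u, offset n j + v) = M $$ (offset n i + u', offset n j + v)"
      using deformed_lap_hjoin_entry[where n = n and E = E and d = d and s = s, OF H _ _ _ _ reg]
      unfolding M_def by simp
  qed
  finally show ?thesis .
qed

theorem corollary6p6:
  fixes r :: nat and n d :: "nat \<Rightarrow> nat" and E :: "nat \<Rightarrow> nat \<Rightarrow> nat \<Rightarrow> bool"
    and lam :: "nat \<Rightarrow> nat \<Rightarrow> real" and s :: real
  assumes "r \<ge> 3"
    and "\<And>i. i < r \<Longrightarrow> simple_graph (n i) (E i)"
    and "\<And>i. i < r \<Longrightarrow> n i \<ge> 1"
    and "\<And>i. i < r \<Longrightarrow> regular (n i) (E i) (d i)"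
    and "\<And>i. i < r \<Longrightarrow> spec (adj_mat (n i) (E i)) = mset (map (lam i) [0..<n i])"
    and "\<And>i. i < r \<Longrightarrow> lam i 0 = real (d i)"
  shows "spec (deformed_lap (hjoin_order r n) (hjoin_E r (cycle_adj r) n E) s) =
           (\<Sum>i<r. mset (map (\<lambda>k. s^2 * (real (d i) + real (cycN r n i) - 1) - s * lam i k + 1)
                              [1..<n i]))
           + spec (F_mat r n d s)"
proof -
  define M where "M = deformed_lap (offset n r) (hjoin_E r (cycle_adj r) n E) s"
  define \<mu> where "\<mu> i k = s^2 * (real (d i) + real (cycN r n i) - 1) - s * lam i k + 1" for i k
  have pos: "0 < n i" if "i < r" for i using assms(3)[OF that] by simp
  have "char_poly (F_mat r n d s) = (\<Prod>a\<in>#spec (F_mat r n d s). [:- a, 1:])"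
    by (rule char_poly_spec_real_symmetric) (auto simp: F_mat_def intro!: eq_matI)
  moreover have "char_poly (deflate 1 (\<lambda>_. n i) (diag_block n i M)) =
      (\<Prod>a\<in>#mset (map (\<mu> i) [1..<n i]). [:- a, 1:])" if "i < r" for i
  proof -
    have "char_poly (deflate 1 (\<lambda>_. n i) (diag_block n i M)) =
        (\<Prod>a\<in>#mset (map (lam i) [1..<n i]). [:- (s\<^sup>2 * (real (d i + cycN r n i) - 1) + 1 - s * a), 1:])"
      unfolding M_def cycN_def using assms pos that
      by (intro char_poly_deflate_diag_block_hjoin[OF irreflp_cycle_adj]) auto
    thus ?thesis by (simp add: \<mu>_def multiset.map_comp o_def algebra_simps)
  qed
  ultimately have
    "char_poly M = (\<Prod>a\<in>#(\<Sum>i<r. mset (map (\<mu> i) [1..<n i])) + spec (F_mat r n d s). [:- a, 1:])"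
    using char_poly_deformed_lap_cycle_join[OF assms(1) pos assms(4)]
    by (simp add: M_def prod_mset_sum_mset mult.commute)
  hence "spec M = (\<Sum>i<r. mset (map (\<mu> i) [1..<n i])) + spec (F_mat r n d s)" by (rule spec_eqI)
  thus ?thesis unfolding M_def \<mu>_def hjoin_order_def .
qed

end
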